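(* Let $d\ge1$, $k\ge2$ be integers, $\alpha\in[0,1)$ and $\beta=1-\alpha$. Let $T_k$ be the $k\times k$ symmetric tridiagonal matrix with diagonal $(\alpha,\ \alpha(d+1),\ \dots,\ \alpha(d+1),\ \alpha d)$ (first entry $\alpha$, entries $2,\dots,k-1$ equal to $\alpha(d+1)$, last entry $\alpha d$) and all off-diagonal entries on the sub- and superdiagonal equal to $\beta\sqrt d$; let $T_j$ be its $j\times j$ leading principal submatrix. Then: (1) as a multiset, the spectrum of $A_\alpha(B(d,k))$ is the union of the spectra of $T_1,\dots,T_k$, where each eigenvalue of $T_j$ is counted with multiplicity $d^{k-j-1}(d-1)$ for $1\le j\le k-1$ and each eigenvalue of $T_k$ with multiplicity $1$ (multiplicities of equal eigenvalues from different $T_j$ being added); (2) the largest eigenvalue of $T_k$ is the largest eigenvalue of $A_\alpha(B(d,k))$.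
   Context: For a graph $G$, $A(G)$ is the adjacency matrix, $D(G)$ the diagonal degree matrix, and $A_\alpha(G)=\alpha D(G)+(1-\alpha)A(G)$. In a rooted tree the level of a vertex is its distance to the root plus one. The Bethe tree $B(d,k)$ is the rooted tree with $k$ levels in which the root has degree $d$, every vertex at level $j$ with $2\le j\le k-1$ has degree $d+1$, and every vertex at level $k$ has degree $1$. *)

theory Defs
  imports "Jordan_Normal_Form.Spectral_Radius" "HOL-Library.Multiset"
begin

definition adj_matrix :: "'v list \<Rightarrow> ('v \<Rightarrow> 'v \<Rightarrow> bool) \<Rightarrow> real mat" where
  "adj_matrix vs E = mat (length vs) (length vs) (\<lambda>(i,j). if E (vs ! i) (vs ! j) then 1 else 0)"

definition vdegree :: "'v list \<Rightarrow> ('v \<Rightarrow> 'v \<Rightarrow> bool) \<Rightarrow> 'v \<Rightarrow> nat" where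
  "vdegree vs E v = card {w \<in> set vs. E v w}"

definition deg_matrix :: "'v list \<Rightarrow> ('v \<Rightarrow> 'v \<Rightarrow> bool) \<Rightarrow> real mat" where
  "deg_matrix vs E = mat (length vs) (length vs)
     (\<lambda>(i,j). if i = j then real (vdegree vs E (vs ! i)) else 0)"

definition A_alpha :: "real \<Rightarrow> 'v list \<Rightarrow> ('v \<Rightarrow> 'v \<Rightarrow> bool) \<Rightarrow> real mat" where
  "A_alpha \<alpha> vs E = \<alpha> \<cdot>\<^sub>m deg_matrix vs E + (1 - \<alpha>) \<cdot>\<^sub>m adj_matrix vs E"

text \<open>Vertices: words over {0..<d} of length < k; the root is the empty word,
  level = length + 1; a vertex is adjacent to its one-letter extensions.\<close>

definition bethe_vertices :: "nat \<Rightarrow> nat \<Rightarrow> nat list list" where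
  "bethe_vertices d k = concat (map (\<lambda>l. List.n_lists l [0..<d]) [0..<k])"

definition bethe_adj :: "nat list \<Rightarrow> nat list \<Rightarrow> bool" where
  "bethe_adj u v \<longleftrightarrow> (\<exists>c. v = u @ [c]) \<or> (\<exists>c. u = v @ [c])"

definition spec_mset :: "real mat \<Rightarrow> complex multiset" where
  "spec_mset A = Abs_multiset (\<lambda>x. order x (char_poly (map_mat complex_of_real A)))"

definition largest_eigenvalue :: "real mat \<Rightarrow> real" where
  "largest_eigenvalue A = Max {x. eigenvalue A x}"

definition T_mat :: "nat \<Rightarrow> nat \<Rightarrow> real \<Rightarrow> real mat" where
  "T_mat d k \<alpha> = mat k k (\<lambda>(i,j).
     if i = j then (if i = 0 then \<alpha> else if i = k - 1 then \<alpha> * real d else \<alpha> * (real d + 1))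
     else if i = j + 1 \<or> j = i + 1 then (1 - \<alpha>) * sqrt (real d)
     else 0)"

definition leading_submat :: "nat \<Rightarrow> 'a mat \<Rightarrow> 'a mat" where
  "leading_submat j A = mat j j (\<lambda>(i,l). A $$ (i,l))"

end

theory Submission
  imports Defs
begin

text \<open>
  Order the vertices of B(d,k) by level. In x I - A_\<alpha> the leaf block is the scalar matrix
  (x - \<alpha>) I, so a Schur complement removes the leaves at the cost of a factor (x - \<alpha>)^(d^(k-1))
  and leaves a matrix of the same shape on B(d,k-1), whose new leaves carry the diagonal entry
  x - \<alpha>(d+1) - (1-\<alpha>)^2 d / (x - \<alpha>) = q_2(x) / q_1(x), where q_j(x) = det (x I - T_j) obey the
  three-term recurrence of the tridiagonal matrix T_k. Iterating gives
  det (x I - A_\<alpha>) = q_k(x) * \<Prod>_{j<k} q_j(x)^(d^(k-j-1) (d-1)) for every x outside the finitely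
  many roots of q_0, ..., q_{k-1}, hence as polynomials, which is (1).
  For (2), the recurrence with positive coefficient (1-\<alpha>)^2 d makes q_{j+1} negative at the
  largest root of q_j, so the largest roots of q_1, ..., q_k strictly increase.
\<close>

section \<open>A Schur complement\<close>

lemma det_four_block_mat_scalar_corner:
  fixes X :: "'a :: field mat"
  assumes X: "X \<in> carrier_mat n n" and B: "B \<in> carrier_mat n m" and C: "C \<in> carrier_mat m n"
    and c: "c \<noteq> 0"
  shows "det (four_block_mat X B C (c \<cdot>\<^sub>m 1\<^sub>m m)) = c ^ m * det (X - (1/c) \<cdot>\<^sub>m (B * C))"
proof -
  let ?S = "X - (1/c) \<cdot>\<^sub>m (B * C)"
  let ?L = "four_block_mat (1\<^sub>m n) ((1/c) \<cdot>\<^sub>m B) (0\<^sub>m m n) (1\<^sub>m m)"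
  let ?R = "four_block_mat ?S (0\<^sub>m n m) C (c \<cdot>\<^sub>m 1\<^sub>m m)"
  have S: "?S \<in> carrier_mat n n" using X B C by auto
  have "?L * ?R = four_block_mat (1\<^sub>m n * ?S + (1/c) \<cdot>\<^sub>m B * C)
     (1\<^sub>m n * 0\<^sub>m n m + (1/c) \<cdot>\<^sub>m B * (c \<cdot>\<^sub>m 1\<^sub>m m))
     (0\<^sub>m m n * ?S + 1\<^sub>m m * C) (0\<^sub>m m n * 0\<^sub>m n m + 1\<^sub>m m * (c \<cdot>\<^sub>m 1\<^sub>m m))"
    by (rule mult_four_block_mat[OF one_carrier_mat smult_carrier_mat[OF B] zero_carrier_mat
          one_carrier_mat S zero_carrier_mat C smult_carrier_mat[OF one_carrier_mat]])
  also have "\<dots> = four_block_mat X B C (c \<cdot>\<^sub>m 1\<^sub>m m)"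
  proof -
    have BC: "(1/c) \<cdot>\<^sub>m B * C = (1/c) \<cdot>\<^sub>m (B * C)" by (rule mult_smult_assoc_mat[OF B C])
    have Bc: "(1/c) \<cdot>\<^sub>m B * (c \<cdot>\<^sub>m 1\<^sub>m m) = c \<cdot>\<^sub>m ((1/c) \<cdot>\<^sub>m B * 1\<^sub>m m)"
      by (rule mult_smult_distrib, insert B, auto)
    have "1\<^sub>m n * ?S + (1/c) \<cdot>\<^sub>m B * C = X"
      unfolding left_mult_one_mat[OF S] BC by (rule eq_matI, insert X B C, auto)
    moreover have "1\<^sub>m n * 0\<^sub>m n m + (1/c) \<cdot>\<^sub>m B * (c \<cdot>\<^sub>m 1\<^sub>m m) = B"
      unfolding Bc using B c by (intro eq_matI) simp_all
    moreover have "0\<^sub>m m n * ?S + 1\<^sub>m m * C = C"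
      using C by (simp add: left_mult_zero_mat[OF S])
    moreover have "0\<^sub>m m n * 0\<^sub>m n m + 1\<^sub>m m * (c \<cdot>\<^sub>m 1\<^sub>m m) = c \<cdot>\<^sub>m 1\<^sub>m m"
      by (rule eq_matI) simp_all
    ultimately show ?thesis by (simp only:)
  qed
  finally have LR: "four_block_mat X B C (c \<cdot>\<^sub>m 1\<^sub>m m) = ?L * ?R" by simp
  have "det ?L = 1"
    by (subst det_four_block_mat_lower_left_zero[of _ n _ m]) (use B in auto)
  moreover have "det ?R = det ?S * c ^ m"
    by (subst det_four_block_mat_upper_right_zero[of _ n _ m]) (use S C in auto)
  moreover have "det (?L * ?R) = det ?L * det ?R"
    by (rule det_mult[of _ "n + m"]) (use B C S in auto)
  ultimately show ?thesis unfolding LR by simp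
qed

section \<open>Characteristic polynomials of tridiagonal matrices\<close>

lemma char_poly_nonzero: "A \<in> carrier_mat n n \<Longrightarrow> char_poly A \<noteq> 0"
  using degree_monic_char_poly[of A n] by auto

lemma lead_coeff_char_poly: "A \<in> carrier_mat n n \<Longrightarrow> lead_coeff (char_poly A) = 1"
  using degree_monic_char_poly[of A n] by simp

definition char_mat :: "nat \<Rightarrow> 'a :: ring_1 mat \<Rightarrow> 'a \<Rightarrow> 'a mat" where
  "char_mat n A x = mat n n (\<lambda>(i,j). (if i = j then x else 0) - A $$ (i,j))"

lemma poly_char_poly_leading_submat:
  "poly (char_poly (leading_submat n A)) x = det (char_mat n A x)"
  unfolding char_poly_def
  by (rule poly_det_cong[of _ n]) (auto simp: char_mat_def char_poly_matrix_def leading_submat_def)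

lemma leading_submat_id: "A \<in> carrier_mat n n \<Longrightarrow> leading_submat n A = A"
  by (auto simp: leading_submat_def intro!: eq_matI)

lemma leading_submat_carrier: "leading_submat j A \<in> carrier_mat j j"
  by (simp add: leading_submat_def)

lemma det_char_mat_0: "det (char_mat 0 A x) = 1"
  by (simp add: det_dim_zero char_mat_def)

lemma mat_delete_char_mat: "mat_delete (char_mat (Suc n) A x) n n = char_mat n A x"
  by (intro eq_matI) (auto simp: mat_delete_def char_mat_def)

lemma det_char_mat_tridiagonal:
  fixes A :: "'a :: comm_ring_1 mat"
  assumes tridiagonal:
    "\<And>i l. i < Suc (Suc n) \<Longrightarrow> l < Suc (Suc n) \<Longrightarrow> l + 1 < i \<or> i + 1 < l \<Longrightarrow> A $$ (i, l) = 0"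
  shows "det (char_mat (Suc (Suc n)) A x) = (x - A $$ (Suc n, Suc n)) * det (char_mat (Suc n) A x)
    - A $$ (Suc n, n) * A $$ (n, Suc n) * det (char_mat n A x)"
proof -
  let ?M = "char_mat (Suc (Suc n)) A x"
  let ?D = "mat_delete ?M (Suc n) n"
  have M: "?M \<in> carrier_mat (Suc (Suc n)) (Suc (Suc n))" by (simp add: char_mat_def)
  have D: "?D \<in> carrier_mat (Suc n) (Suc n)" by (simp add: char_mat_def mat_delete_def)
  have "det ?D = (\<Sum>i<Suc n. ?D $$ (i, n) * cofactor ?D i n)"
    by (rule laplace_expansion_column[OF D]) simp
  also have "\<dots> = ?D $$ (n, n) * cofactor ?D n n"
    using tridiagonal by (simp add: char_mat_def mat_delete_def)
  also have "\<dots> = - A $$ (n, Suc n) * det (char_mat n A x)"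
  proof -
    have "mat_delete ?D n n = char_mat n A x"
      by (intro eq_matI) (auto simp: mat_delete_def char_mat_def)
    then show ?thesis by (simp add: cofactor_def char_mat_def mat_delete_def)
  qed
  finally have det_D: "det ?D = - A $$ (n, Suc n) * det (char_mat n A x)" .
  have "det ?M = (\<Sum>l<Suc (Suc n). ?M $$ (Suc n, l) * cofactor ?M (Suc n) l)"
    by (rule laplace_expansion_row[OF M]) simp
  also have "\<dots> = ?M $$ (Suc n, n) * cofactor ?M (Suc n) n + ?M $$ (Suc n, Suc n) * cofactor ?M (Suc n) (Suc n)"
    using tridiagonal by (simp add: char_mat_def)
  also have "cofactor ?M (Suc n) (Suc n) = det (char_mat (Suc n) A x)"
    by (simp add: cofactor_def mat_delete_char_mat)
  also have "?M $$ (Suc n, n) * cofactor ?M (Suc n) n = - A $$ (Suc n, n) * - det ?D"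
    by (simp add: cofactor_def char_mat_def)
  finally show ?thesis unfolding det_D by (simp add: char_mat_def algebra_simps)
qed

lemma T_mat_carrier: "T_mat d k \<alpha> \<in> carrier_mat k k"
  by (simp add: T_mat_def)

lemma det_char_mat_T_mat_1: "k \<ge> 1 \<Longrightarrow> det (char_mat 1 (T_mat d k \<alpha>) x) = x - \<alpha>"
  by (subst det_single) (auto simp: char_mat_def T_mat_def)

lemma det_char_mat_T_mat:
  assumes "2 \<le> j" "j \<le> k"
  shows "det (char_mat j (T_mat d k \<alpha>) x) =
    (x - (if j = k then \<alpha> * real d else \<alpha> * (real d + 1))) * det (char_mat (j - 1) (T_mat d k \<alpha>) x)
    - (1 - \<alpha>)\<^sup>2 * real d * det (char_mat (j - 2) (T_mat d k \<alpha>) x)"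
proof -
  obtain n where j: "j = Suc (Suc n)" using assms(1) by (metis add_2_eq_Suc le_Suc_ex)
  have "det (char_mat j (T_mat d k \<alpha>) x) =
      (x - T_mat d k \<alpha> $$ (Suc n, Suc n)) * det (char_mat (Suc n) (T_mat d k \<alpha>) x)
      - T_mat d k \<alpha> $$ (Suc n, n) * T_mat d k \<alpha> $$ (n, Suc n) * det (char_mat n (T_mat d k \<alpha>) x)"
    unfolding j using assms by (intro det_char_mat_tridiagonal) (auto simp: j T_mat_def)
  moreover have "T_mat d k \<alpha> $$ (Suc n, Suc n) = (if j = k then \<alpha> * real d else \<alpha> * (real d + 1))"
    using assms by (auto simp: j T_mat_def)
  moreover have "T_mat d k \<alpha> $$ (Suc n, n) * T_mat d k \<alpha> $$ (n, Suc n) = (1 - \<alpha>)\<^sup>2 * real d"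
    using assms by (simp add: j T_mat_def power2_eq_square algebra_simps)
  ultimately show ?thesis
    by (simp add: j)
qed

lemma poly_eqI_cofinite:
  fixes p q :: "'a :: {idom, ring_char_0} poly"
  assumes "finite Z" and "\<And>x. x \<notin> Z \<Longrightarrow> poly p x = poly q x"
  shows "p = q"
proof (rule ccontr)
  assume "p \<noteq> q"
  then have "finite (Z \<union> {x. poly (p - q) x = 0})"
    using assms(1) poly_roots_finite[of "p - q"] by simp
  moreover have "UNIV \<subseteq> Z \<union> {x. poly (p - q) x = 0}"
    using assms(2) by auto
  ultimately show False
    using infinite_UNIV_char_0 finite_subset by blast
qed

lemma spec_mset_eq_proots:
  assumes "A \<in> carrier_mat n n"
  shows "spec_mset A = proots (char_poly (map_mat complex_of_real A))"
proof -
  have "char_poly (map_mat complex_of_real A) \<noteq> 0"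
    using assms by (intro char_poly_nonzero[of _ n]) simp
  then have "(\<lambda>x. order x (char_poly (map_mat complex_of_real A))) =
      count (proots (char_poly (map_mat complex_of_real A)))"
    by auto
  then show ?thesis
    unfolding spec_mset_def by (simp add: count_inverse)
qed

lemma spec_mset_char_poly_factor:
  assumes A: "A \<in> carrier_mat n n" and B: "B \<in> carrier_mat m m"
    and C: "\<And>j. j \<in> J \<Longrightarrow> C j \<in> carrier_mat (s j) (s j)" and J: "finite J"
    and factor: "char_poly A = char_poly B * (\<Prod>j \<in> J. char_poly (C j) ^ e j)"
  shows "spec_mset A = (\<Sum>j \<in> J. repeat_mset (e j) (spec_mset (C j))) + spec_mset B"
proof -
  interpret of_real_poly: map_poly_comm_ring_hom "of_real :: real \<Rightarrow> complex" ..
  let ?cp = "\<lambda>M. char_poly (map_mat complex_of_real M)"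
  have cp: "?cp M = map_poly complex_of_real (char_poly M)" if "M \<in> carrier_mat l l" for M l
    using that by (rule of_real_hom.char_poly_hom)
  have nonzero: "?cp M \<noteq> 0" if "M \<in> carrier_mat l l" for M l
    using that by (intro char_poly_nonzero[of _ l]) simp
  have "?cp A = map_poly of_real (char_poly B) * (\<Prod>j \<in> J. map_poly of_real (char_poly (C j)) ^ e j)"
    unfolding cp[OF A] factor of_real_poly.hom_mult of_real_poly.hom_prod of_real_poly.hom_power ..
  also have "\<dots> = ?cp B * (\<Prod>j \<in> J. ?cp (C j) ^ e j)"
    by (auto simp: cp[OF B] cp[OF C] intro!: prod.cong)
  finally have "proots (?cp A) = proots (?cp B) + (\<Sum>j \<in> J. repeat_mset (e j) (proots (?cp (C j))))"
    using nonzero[OF B] nonzero[OF C] J by (simp add: proots_mult proots_prod proots_power)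
  then show ?thesis
    by (simp add: spec_mset_eq_proots[OF A] spec_mset_eq_proots[OF B] spec_mset_eq_proots[OF C]
        add.commute cong: sum.cong)
qed

lemma poly_root_above:
  fixes p :: "real poly"
  assumes lc: "lead_coeff p > 0" and y: "poly p y < 0"
  shows "\<exists>r > y. poly p r = 0"
proof -
  obtain N where N: "\<And>x. x \<ge> N \<Longrightarrow> lead_coeff p \<le> poly p x"
    using poly_pinfty_gt_lc[OF lc] by auto
  have "poly p (max N (y + 1)) > 0"
    using N[of "max N (y + 1)"] lc by simp
  then have "\<exists>r. y < r \<and> r < max N (y + 1) \<and> poly p r = 0"
    by (intro poly_IVT_pos[OF _ y]) simp_all
  then show ?thesis by blast
qed

lemma poly_pos_above_roots:
  fixes p :: "real poly"
  assumes lc: "lead_coeff p > 0" and above: "\<And>r. poly p r = 0 \<Longrightarrow> r < x"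
  shows "poly p x > 0"
proof (rule ccontr)
  assume "\<not> poly p x > 0"
  then consider "poly p x = 0" | "poly p x < 0" by linarith
  then show False
  proof cases
    case 1
    then show False using above[of x] by simp
  next
    case 2
    then show False using poly_root_above[OF lc] above by force
  qed
qed

lemma root_le_Max_roots:
  fixes p :: "real poly"
  shows "p \<noteq> 0 \<Longrightarrow> poly p r = 0 \<Longrightarrow> r \<le> Max {x. poly p x = 0}"
  by (intro Max_ge) (auto simp: poly_roots_finite)

lemma poly_Max_roots:
  fixes p :: "real poly"
  shows "p \<noteq> 0 \<Longrightarrow> poly p r = 0 \<Longrightarrow> poly p (Max {x. poly p x = 0}) = 0"
  using Max_in[of "{x. poly p x = 0}"] by (auto simp: poly_roots_finite)

lemma largest_eigenvalue_eq_Max_roots: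
  assumes "A \<in> carrier_mat n n"
  shows "largest_eigenvalue A = Max {x. poly (char_poly A) x = 0}"
  unfolding largest_eigenvalue_def eigenvalue_root_char_poly[OF assms] ..

lemma bethe_vertices_Suc:
  "bethe_vertices d (Suc m) = bethe_vertices d m @ List.n_lists m [0..<d]"
  by (simp add: bethe_vertices_def)

lemma bethe_vertices_Suc_0: "bethe_vertices d (Suc 0) = [[]]"
  by (simp add: bethe_vertices_def)

lemma set_bethe_vertices: "set (bethe_vertices d m) = {u. length u < m \<and> set u \<subseteq> {0..<d}}"
  by (auto simp: bethe_vertices_def set_n_lists)

lemma distinct_bethe_vertices: "distinct (bethe_vertices d m)"
  by (induct m) (auto simp: bethe_vertices_Suc set_bethe_vertices distinct_n_lists set_n_lists
      bethe_vertices_def[of d 0])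

lemma length_bethe_vertices_Suc:
  "length (bethe_vertices d (Suc m)) = length (bethe_vertices d m) + d ^ m"
  by (simp add: bethe_vertices_Suc length_n_lists)

lemma nth_bethe_vertices:
  assumes "i < length (bethe_vertices d m)"
  shows "length (bethe_vertices d m ! i) < m" "set (bethe_vertices d m ! i) \<subseteq> {0..<d}"
  using nth_mem[OF assms] by (auto simp: set_bethe_vertices)

lemma length_nth_n_lists: "i < d ^ m \<Longrightarrow> length (List.n_lists m [0..<d] ! i) = m"
  using nth_mem[of i "List.n_lists m [0..<d]"] by (auto simp: set_n_lists length_n_lists)

lemma not_bethe_adj_same_length: "length u = length v \<Longrightarrow> \<not> bethe_adj u v"
  by (auto simp: bethe_adj_def)

lemma bethe_adj_shorter_iff: "length u < length v \<Longrightarrow> bethe_adj u v \<longleftrightarrow> (\<exists>c. v = u @ [c])"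
  by (auto simp: bethe_adj_def)

lemma bethe_common_children:
  assumes "length u < m" "length v < m" "set u \<subseteq> {0..<d}"
  shows "{y \<in> set (List.n_lists m [0..<d]). bethe_adj u y \<and> bethe_adj y v} =
    (if u = v \<and> Suc (length u) = m then (\<lambda>c. u @ [c]) ` {0..<d} else {})"
proof -
  have "bethe_adj u y \<and> bethe_adj y v \<longleftrightarrow> (\<exists>c. y = u @ [c]) \<and> (\<exists>c. y = v @ [c])"
    if "length y = m" for y
    using that assms bethe_adj_shorter_iff[of u y] bethe_adj_shorter_iff[of v y]
    by (auto simp: bethe_adj_def)
  then have "{y \<in> set (List.n_lists m [0..<d]). bethe_adj u y \<and> bethe_adj y v} =
      {y. set y \<subseteq> {0..<d} \<and> length y = m \<and> (\<exists>c. y = u @ [c]) \<and> (\<exists>c. y = v @ [c])}"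
    by (auto simp: set_n_lists)
  also have "\<dots> = (if u = v \<and> Suc (length u) = m then (\<lambda>c. u @ [c]) ` {0..<d} else {})"
    using assms by auto
  finally show ?thesis .
qed

lemma vdegree_bethe:
  assumes "length u < k" "set u \<subseteq> {0..<d}"
  shows "vdegree (bethe_vertices d k) bethe_adj u =
    (if Suc (length u) < k then d else 0) + (if u = [] then 0 else 1)"
proof -
  let ?children = "if Suc (length u) < k then (\<lambda>c. u @ [c]) ` {0..<d} else {}"
  let ?parent = "if u = [] then {} else {butlast u}"
  have "{w \<in> set (bethe_vertices d k). bethe_adj u w} = ?children \<union> ?parent"
  proof (intro equalityI subsetI)
    fix w assume "w \<in> {w \<in> set (bethe_vertices d k). bethe_adj u w}"
    then show "w \<in> ?children \<union> ?parent"
      by (auto simp: set_bethe_vertices bethe_adj_def)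
  next
    fix w assume "w \<in> ?children \<union> ?parent"
    then show "w \<in> {w \<in> set (bethe_vertices d k). bethe_adj u w}"
      using assms by (auto simp: set_bethe_vertices bethe_adj_def split: if_splits dest: in_set_butlastD)
        (metis append_butlast_last_id)+
  qed
  moreover have "?children \<inter> ?parent = {}"
    by (cases u rule: rev_cases) auto
  moreover have "card ?children = (if Suc (length u) < k then d else 0)"
    by (auto simp: card_image inj_on_def)
  ultimately show ?thesis
    unfolding vdegree_def by (simp add: card_Un_disjoint)
qed

section \<open>Peeling off the leaf level\<close>

text \<open>The shape of x I - A_\<alpha>(B(d,m)): diagonal entry r at the root, e at inner vertices and l at
  the leaves (the root counts as a leaf when m = 1), and w on the edges.\<close>

definition level_mat :: "nat \<Rightarrow> nat \<Rightarrow> real \<Rightarrow> real \<Rightarrow> real \<Rightarrow> real \<Rightarrow> real mat" where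
  "level_mat d m r e l w = (let vs = bethe_vertices d m in mat (length vs) (length vs) (\<lambda>(i,j).
     if i = j then (if Suc (length (vs ! i)) = m then l else if vs ! i = [] then r else e)
     else if bethe_adj (vs ! i) (vs ! j) then w else 0))"

definition child_block :: "nat \<Rightarrow> nat \<Rightarrow> real \<Rightarrow> real mat" where
  "child_block d m w = mat (length (bethe_vertices d m)) (d ^ m) (\<lambda>(i,j).
     if bethe_adj (bethe_vertices d m ! i) (List.n_lists m [0..<d] ! j) then w else 0)"

definition parent_block :: "nat \<Rightarrow> nat \<Rightarrow> real \<Rightarrow> real mat" where
  "parent_block d m w = mat (d ^ m) (length (bethe_vertices d m)) (\<lambda>(i,j).
     if bethe_adj (List.n_lists m [0..<d] ! i) (bethe_vertices d m ! j) then w else 0)"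

lemma level_mat_carrier:
  "level_mat d m r e l w \<in> carrier_mat (length (bethe_vertices d m)) (length (bethe_vertices d m))"
  by (simp add: level_mat_def Let_def)

lemma det_level_mat_Suc_0: "det (level_mat d (Suc 0) r e l w) = l"
  by (subst det_single) (auto simp: level_mat_def bethe_vertices_Suc_0 Let_def)

lemma level_mat_Suc:
  assumes "m \<ge> 1"
  shows "level_mat d (Suc m) r e l w =
    four_block_mat (level_mat d m r e (if m = 1 then r else e) w)
      (child_block d m w) (parent_block d m w) (l \<cdot>\<^sub>m 1\<^sub>m (d ^ m))"
    (is "_ = four_block_mat ?H _ _ _")
proof (rule eq_matI)
  let ?vs = "bethe_vertices d m" and ?L = "List.n_lists m [0..<d]"
  let ?N = "length ?vs"
  have nth: "bethe_vertices d (Suc m) ! x = (if x < ?N then ?vs ! x else ?L ! (x - ?N))" for x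
    by (simp add: bethe_vertices_Suc nth_append)
  have H: "dim_row ?H = ?N" "dim_col ?H = ?N"
    by (simp_all add: level_mat_def Let_def)
  fix i j
  assume "i < dim_row (four_block_mat ?H (child_block d m w) (parent_block d m w) (l \<cdot>\<^sub>m 1\<^sub>m (d ^ m)))"
    and "j < dim_col (four_block_mat ?H (child_block d m w) (parent_block d m w) (l \<cdot>\<^sub>m 1\<^sub>m (d ^ m)))"
  then have i: "i < ?N + d ^ m" and j: "j < ?N + d ^ m" by (simp_all add: level_mat_def Let_def)
  show "level_mat d (Suc m) r e l w $$ (i, j) =
    four_block_mat ?H (child_block d m w) (parent_block d m w) (l \<cdot>\<^sub>m 1\<^sub>m (d ^ m)) $$ (i, j)"
    using i j assms nth_bethe_vertices(1)[of i d m] length_nth_n_lists[of "i - ?N" d m]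
      length_nth_n_lists[of "j - ?N" d m] not_bethe_adj_same_length[of "?L ! (i - ?N)" "?L ! (j - ?N)"]
    by (auto simp: level_mat_def child_block_def parent_block_def Let_def length_bethe_vertices_Suc nth H)
qed (simp_all add: level_mat_def Let_def length_bethe_vertices_Suc)

lemma child_block_mult_parent_block:
  assumes i: "i < length (bethe_vertices d m)" and j: "j < length (bethe_vertices d m)"
  shows "(child_block d m w * parent_block d m w) $$ (i, j) =
    (if i = j \<and> Suc (length (bethe_vertices d m ! i)) = m then real d * w\<^sup>2 else 0)"
proof -
  let ?vs = "bethe_vertices d m" and ?L = "List.n_lists m [0..<d]"
  let ?P = "\<lambda>y. bethe_adj (?vs ! i) y \<and> bethe_adj y (?vs ! j)"
  have "(child_block d m w * parent_block d m w) $$ (i, j) =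
      (\<Sum>l = 0..<length ?L. (\<lambda>y. if ?P y then w\<^sup>2 else 0) (?L ! l))"
    using i j by (auto simp: child_block_def parent_block_def scalar_prod_def length_n_lists
        power2_eq_square intro: sum.cong)
  also have "\<dots> = (\<Sum>y \<in> set ?L. if ?P y then w\<^sup>2 else 0)"
    using sum_list_sum_nth[of "map (\<lambda>y. if ?P y then w\<^sup>2 else 0) ?L"]
    by (simp add: sum_list_distinct_conv_sum_set distinct_n_lists)
  also have "\<dots> = w\<^sup>2 * real (card {y \<in> set ?L. ?P y})"
    by (simp add: sum.inter_filter[symmetric])
  also have "{y \<in> set ?L. ?P y} =
      (if i = j \<and> Suc (length (?vs ! i)) = m then (\<lambda>c. (?vs ! i) @ [c]) ` {0..<d} else {})"
    using bethe_common_children[OF nth_bethe_vertices(1)[OF i] nth_bethe_vertices(1)[OF j]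
        nth_bethe_vertices(2)[OF i]] nth_eq_iff_index_eq[OF distinct_bethe_vertices i j]
    by simp
  finally show ?thesis
    by (auto simp: card_image inj_on_def)
qed

lemma det_level_mat_Suc:
  assumes m: "m \<ge> 1" and l: "l \<noteq> 0"
  shows "det (level_mat d (Suc m) r e l w) =
    l ^ (d ^ m) * det (level_mat d m r e ((if m = 1 then r else e) - real d * w\<^sup>2 / l) w)"
proof -
  let ?N = "length (bethe_vertices d m)"
  let ?H = "level_mat d m r e (if m = 1 then r else e) w"
  have B: "child_block d m w \<in> carrier_mat ?N (d ^ m)" by (simp add: child_block_def)
  have C: "parent_block d m w \<in> carrier_mat (d ^ m) ?N" by (simp add: parent_block_def)
  have "det (level_mat d (Suc m) r e l w) =
      l ^ (d ^ m) * det (?H - (1/l) \<cdot>\<^sub>m (child_block d m w * parent_block d m w))"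
    unfolding level_mat_Suc[OF m] by (rule det_four_block_mat_scalar_corner[OF level_mat_carrier B C l])
  also have "?H - (1/l) \<cdot>\<^sub>m (child_block d m w * parent_block d m w) =
      level_mat d m r e ((if m = 1 then r else e) - real d * w\<^sup>2 / l) w"
    using B C by (intro eq_matI)
      (auto simp: child_block_mult_parent_block level_mat_def Let_def simp del: index_mult_mat(1))
  finally show ?thesis .
qed

lemma A_alpha_carrier: "A_alpha \<alpha> vs E \<in> carrier_mat (length vs) (length vs)"
  by (simp add: A_alpha_def deg_matrix_def adj_matrix_def)

lemma char_mat_A_alpha_bethe:
  assumes "k \<ge> 2"
  shows "char_mat (length (bethe_vertices d k)) (A_alpha \<alpha> (bethe_vertices d k) bethe_adj) x =
    level_mat d k (x - \<alpha> * real d) (x - \<alpha> * (real d + 1)) (x - \<alpha>) (\<alpha> - 1)"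
proof (rule eq_matI)
  let ?vs = "bethe_vertices d k"
  fix i j
  assume "i < dim_row (level_mat d k (x - \<alpha> * real d) (x - \<alpha> * (real d + 1)) (x - \<alpha>) (\<alpha> - 1))"
    and "j < dim_col (level_mat d k (x - \<alpha> * real d) (x - \<alpha> * (real d + 1)) (x - \<alpha>) (\<alpha> - 1))"
  then have i: "i < length ?vs" and j: "j < length ?vs" by (simp_all add: level_mat_def Let_def)
  have "length (?vs ! i) = 0 \<longleftrightarrow> ?vs ! i = []" by simp
  then show "char_mat (length ?vs) (A_alpha \<alpha> ?vs bethe_adj) x $$ (i, j) =
      level_mat d k (x - \<alpha> * real d) (x - \<alpha> * (real d + 1)) (x - \<alpha>) (\<alpha> - 1) $$ (i, j)"
    using i j assms nth_bethe_vertices[OF i] not_bethe_adj_same_length[of "?vs ! i" "?vs ! i"]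
      vdegree_bethe[OF nth_bethe_vertices[OF i]]
    by (auto simp: char_mat_def level_mat_def Let_def A_alpha_def deg_matrix_def adj_matrix_def
        algebra_simps)
qed (simp_all add: char_mat_def level_mat_def Let_def)

lemma det_level_mat_peel:
  fixes q :: "nat \<Rightarrow> real"
  assumes d: "d \<ge> 1"
    and nonzero: "\<And>l. l < k \<Longrightarrow> q l \<noteq> 0"
    and rec: "\<And>i. 1 \<le> i \<Longrightarrow> i < k \<Longrightarrow>
      q (Suc i) = (if Suc i = k then r else e) * q i - real d * w\<^sup>2 * q (i - 1)"
  shows "1 \<le> m \<Longrightarrow> m \<le> k \<Longrightarrow> i + m = k + 1 \<Longrightarrow>
    det (level_mat d m r e (q i / q (i - 1)) w) * q (i - 1) ^ (d ^ (m - 1)) =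
    q k * (\<Prod>l \<in> {i..k - 1}. q l ^ (d ^ (k - l - 1) * (d - 1)))"
proof (induction m arbitrary: i)
  case 0
  then show ?case by simp
next
  case (Suc m)
  show ?case
  proof (cases "m = 0")
    case True
    then show ?thesis
      using Suc.prems nonzero[of "k - 1"] by (simp add: det_level_mat_Suc_0)
  next
    case False
    then have m: "m \<ge> 1" and i: "1 \<le> i" "i < k" and "i + m = k" using Suc.prems by auto
    have q: "q i \<noteq> 0" "q (i - 1) \<noteq> 0" using nonzero i by auto
    let ?c = "q i / q (i - 1)"
    have leaf: "(if m = 1 then r else e) - real d * w\<^sup>2 / ?c = q (Suc i) / q i"
      using rec[OF i] q Suc.prems by (auto simp: field_simps)
    have pow: "d ^ m = d ^ (m - 1) * (d - 1) + d ^ (m - 1)"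
      using d m by (cases m) (auto simp: algebra_simps)
    have "det (level_mat d (Suc m) r e ?c w) = ?c ^ (d ^ m) * det (level_mat d m r e (q (Suc i) / q i) w)"
      using det_level_mat_Suc[OF m, of ?c] leaf q by simp
    then have "det (level_mat d (Suc m) r e ?c w) * q (i - 1) ^ (d ^ m) =
        (?c * q (i - 1)) ^ (d ^ m) * det (level_mat d m r e (q (Suc i) / q i) w)"
      by (simp only: power_mult_distrib mult_ac)
    also have "\<dots> = q i ^ (d ^ m) * det (level_mat d m r e (q (Suc i) / q i) w)"
      using q by simp
    also have "\<dots> = q i ^ (d ^ (m - 1) * (d - 1)) *
        (det (level_mat d m r e (q (Suc i) / q (Suc i - 1)) w) * q (Suc i - 1) ^ (d ^ (m - 1)))"
      using q by (simp add: pow power_add)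
    also have "\<dots> = q i ^ (d ^ (m - 1) * (d - 1)) *
        (q k * (\<Prod>l \<in> {Suc i..k - 1}. q l ^ (d ^ (k - l - 1) * (d - 1))))"
      using Suc.IH[of "Suc i"] m Suc.prems by simp
    also have "\<dots> = q k * (\<Prod>l \<in> {i..k - 1}. q l ^ (d ^ (k - l - 1) * (d - 1)))"
      using prod.atLeast_Suc_atMost[of i "k - 1" "\<lambda>l. q l ^ (d ^ (k - l - 1) * (d - 1))"] i
      by (simp add: mult_ac flip: \<open>i + m = k\<close>)
    finally show ?thesis by simp
  qed
qed

context
  fixes d k :: nat and \<alpha> :: real
  assumes d: "d \<ge> 1" and k: "k \<ge> 2"
begin

lemma poly_char_poly_A_alpha_bethe:
  assumes nonzero: "\<And>l. l < k \<Longrightarrow> det (char_mat l (T_mat d k \<alpha>) x) \<noteq> 0"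
  shows "poly (char_poly (A_alpha \<alpha> (bethe_vertices d k) bethe_adj)) x =
    det (char_mat k (T_mat d k \<alpha>) x) *
    (\<Prod>l \<in> {1..k - 1}. det (char_mat l (T_mat d k \<alpha>) x) ^ (d ^ (k - l - 1) * (d - 1)))"
proof -
  let ?vs = "bethe_vertices d k"
  let ?q = "\<lambda>l. det (char_mat l (T_mat d k \<alpha>) x)"
  have "poly (char_poly (A_alpha \<alpha> ?vs bethe_adj)) x = det (char_mat (length ?vs) (A_alpha \<alpha> ?vs bethe_adj) x)"
    using poly_char_poly_leading_submat[of "length ?vs" "A_alpha \<alpha> ?vs bethe_adj" x]
    unfolding leading_submat_id[OF A_alpha_carrier] .
  also have "\<dots> = det (level_mat d k (x - \<alpha> * real d) (x - \<alpha> * (real d + 1)) (x - \<alpha>) (\<alpha> - 1))"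
    unfolding char_mat_A_alpha_bethe[OF k] ..
  also have "\<dots> = det (level_mat d k (x - \<alpha> * real d) (x - \<alpha> * (real d + 1)) (?q 1 / ?q (1 - 1)) (\<alpha> - 1)) *
      ?q (1 - 1) ^ (d ^ (k - 1))"
    using k det_char_mat_T_mat_1[of k d \<alpha> x] by (simp add: det_char_mat_0)
  also have "\<dots> = ?q k * (\<Prod>l \<in> {1..k - 1}. ?q l ^ (d ^ (k - l - 1) * (d - 1)))"
  proof (rule det_level_mat_peel[OF d nonzero])
    fix i assume "1 \<le> i" "i < k"
    then have "?q (Suc i) = (x - (if Suc i = k then \<alpha> * real d else \<alpha> * (real d + 1))) * ?q i
        - (1 - \<alpha>)\<^sup>2 * real d * ?q (i - 1)"
      using det_char_mat_T_mat[of "Suc i" k d \<alpha> x] by simp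
    then show "?q (Suc i) = (if Suc i = k then x - \<alpha> * real d else x - \<alpha> * (real d + 1)) * ?q i
        - real d * (\<alpha> - 1)\<^sup>2 * ?q (i - 1)"
      unfolding if_distrib[of "\<lambda>y. x - y", symmetric]
      by (simp add: power2_commute algebra_simps split del: if_split)
  qed (use k in auto)
  finally show ?thesis .
qed

lemma char_poly_A_alpha_bethe:
  "char_poly (A_alpha \<alpha> (bethe_vertices d k) bethe_adj) = char_poly (T_mat d k \<alpha>) *
    (\<Prod>j \<in> {1..k - 1}. char_poly (leading_submat j (T_mat d k \<alpha>)) ^ (d ^ (k - j - 1) * (d - 1)))"
proof (rule poly_eqI_cofinite)
  let ?cp = "\<lambda>l. char_poly (leading_submat l (T_mat d k \<alpha>))"
  show "finite (\<Union>l<k. {x. poly (?cp l) x = 0})"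
    using poly_roots_finite[OF char_poly_nonzero[OF leading_submat_carrier]] by blast
  fix x assume "x \<notin> (\<Union>l<k. {x. poly (?cp l) x = 0})"
  then have "\<And>l. l < k \<Longrightarrow> det (char_mat l (T_mat d k \<alpha>) x) \<noteq> 0"
    by (auto simp: poly_char_poly_leading_submat)
  then show "poly (char_poly (A_alpha \<alpha> (bethe_vertices d k) bethe_adj)) x =
      poly (char_poly (T_mat d k \<alpha>) * (\<Prod>j \<in> {1..k - 1}. ?cp j ^ (d ^ (k - j - 1) * (d - 1)))) x"
    using poly_char_poly_leading_submat[of k "T_mat d k \<alpha>" x]
    by (simp add: poly_char_poly_A_alpha_bethe poly_prod poly_char_poly_leading_submat
        leading_submat_id[OF T_mat_carrier])
qed

lemma spec_mset_A_alpha_bethe: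
  "spec_mset (A_alpha \<alpha> (bethe_vertices d k) bethe_adj) =
    (\<Sum>j \<in> {1..k - 1}. repeat_mset (d ^ (k - j - 1) * (d - 1)) (spec_mset (leading_submat j (T_mat d k \<alpha>))))
    + spec_mset (T_mat d k \<alpha>)"
  by (rule spec_mset_char_poly_factor[OF A_alpha_carrier T_mat_carrier leading_submat_carrier
        finite_atLeastAtMost char_poly_A_alpha_bethe])

context
  assumes \<alpha>: "\<alpha> < 1"
begin

abbreviation cp_T :: "nat \<Rightarrow> real poly" where
  "cp_T j \<equiv> char_poly (leading_submat j (T_mat d k \<alpha>))"

abbreviation largest_root_T :: "nat \<Rightarrow> real" where
  "largest_root_T j \<equiv> Max {x. poly (cp_T j) x = 0}"

lemma cp_T_nonzero: "cp_T j \<noteq> 0"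
  by (rule char_poly_nonzero[OF leading_submat_carrier])

lemma cp_T_Suc_root_above:
  assumes n: "1 \<le> n" "Suc n \<le> k"
    and root: "poly (cp_T n) y = 0" and below: "\<And>r. poly (cp_T (n - 1)) r = 0 \<Longrightarrow> r < y"
  shows "\<exists>r > y. poly (cp_T (Suc n)) r = 0"
proof (rule poly_root_above)
  show "lead_coeff (cp_T (Suc n)) > 0"
    by (simp add: lead_coeff_char_poly[OF leading_submat_carrier])
  have "poly (cp_T (n - 1)) y > 0"
    using below by (intro poly_pos_above_roots) (simp_all add: lead_coeff_char_poly[OF leading_submat_carrier])
  moreover have "(1 - \<alpha>)\<^sup>2 * real d > 0"
    using d \<alpha> by simp
  ultimately show "poly (cp_T (Suc n)) y < 0"
    using det_char_mat_T_mat[of "Suc n" k d \<alpha> y] n root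
    by (simp add: poly_char_poly_leading_submat)
qed

lemma roots_below_largest_root_T:
  "1 \<le> n \<Longrightarrow> n \<le> k \<Longrightarrow>
    (\<exists>r. poly (cp_T n) r = 0) \<and> (\<forall>l < n. \<forall>r. poly (cp_T l) r = 0 \<longrightarrow> r < largest_root_T n)"
proof (induction n)
  case 0
  then show ?case by simp
next
  case (Suc n)
  show ?case
  proof (cases "n = 0")
    case True
    have "poly (cp_T 1) \<alpha> = 0" "\<And>r. poly (cp_T 0) r \<noteq> 0"
      using k det_char_mat_T_mat_1[of k d \<alpha> \<alpha>] by (simp_all add: poly_char_poly_leading_submat det_char_mat_0)
    then show ?thesis using True by auto
  next
    case False
    with Suc obtain y where y: "poly (cp_T n) y = 0"
      and below: "\<And>l r. l < n \<Longrightarrow> poly (cp_T l) r = 0 \<Longrightarrow> r < largest_root_T n" by auto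
    let ?y = "largest_root_T n"
    have root: "poly (cp_T n) ?y = 0"
      using poly_Max_roots[OF cp_T_nonzero y] .
    obtain r where r: "r > ?y" "poly (cp_T (Suc n)) r = 0"
      using cp_T_Suc_root_above[OF _ _ root] below[of "n - 1"] False Suc.prems by auto
    have gt: "?y < largest_root_T (Suc n)"
      using r root_le_Max_roots[OF cp_T_nonzero r(2)] by simp
    show ?thesis
    proof (intro conjI allI impI)
      show "\<exists>r. poly (cp_T (Suc n)) r = 0" using r by blast
      fix l r' assume l: "l < Suc n" and r': "poly (cp_T l) r' = 0"
      have "r' \<le> ?y"
      proof (cases "l = n")
        case True
        then show ?thesis using root_le_Max_roots[OF cp_T_nonzero] r' by simp
      next
        case False
        then show ?thesis using below[of l r'] l r' by simp
      qed
      then show "r' < largest_root_T (Suc n)" using gt by simp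
    qed
  qed
qed

lemma largest_eigenvalue_A_alpha_bethe:
  "largest_eigenvalue (T_mat d k \<alpha>) = largest_eigenvalue (A_alpha \<alpha> (bethe_vertices d k) bethe_adj)"
proof -
  let ?A = "A_alpha \<alpha> (bethe_vertices d k) bethe_adj"
  obtain y where y: "poly (cp_T k) y = 0"
    and below: "\<And>l r. l < k \<Longrightarrow> poly (cp_T l) r = 0 \<Longrightarrow> r < largest_root_T k"
    using roots_below_largest_root_T[of k] k by auto
  have cp_A: "char_poly ?A = cp_T k * (\<Prod>j \<in> {1..k - 1}. cp_T j ^ (d ^ (k - j - 1) * (d - 1)))"
    using char_poly_A_alpha_bethe leading_submat_id[OF T_mat_carrier] by simp
  have "Max {x. poly (char_poly ?A) x = 0} = largest_root_T k"
  proof (rule Max_eqI)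
    show "finite {x. poly (char_poly ?A) x = 0}"
      by (rule poly_roots_finite[OF char_poly_nonzero[OF A_alpha_carrier]])
    show "largest_root_T k \<in> {x. poly (char_poly ?A) x = 0}"
      using poly_Max_roots[OF cp_T_nonzero y] by (simp add: cp_A)
  next
    fix x assume "x \<in> {x. poly (char_poly ?A) x = 0}"
    then have "poly (cp_T k) x = 0 \<or> (\<exists>j \<in> {1..k - 1}. poly (cp_T j) x = 0)"
      by (auto simp: cp_A poly_prod)
    then show "x \<le> largest_root_T k"
    proof
      assume "poly (cp_T k) x = 0"
      then show ?thesis by (rule root_le_Max_roots[OF cp_T_nonzero])
    next
      assume "\<exists>j \<in> {1..k - 1}. poly (cp_T j) x = 0"
      then obtain j where "j \<in> {1..k - 1}" "poly (cp_T j) x = 0" by blast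
      moreover have "j < k" using \<open>j \<in> {1..k - 1}\<close> k by auto
      ultimately show ?thesis using below[of j x] by simp
    qed
  qed
  then show ?thesis
    by (simp add: largest_eigenvalue_eq_Max_roots[OF A_alpha_carrier]
        largest_eigenvalue_eq_Max_roots[OF T_mat_carrier] leading_submat_id[OF T_mat_carrier])
qed

end

end

theorem corollary7:
  fixes d k :: nat and \<alpha> :: real
  assumes "d \<ge> 1" and "k \<ge> 2" and "0 \<le> \<alpha>" and "\<alpha> < 1"
  shows "spec_mset (A_alpha \<alpha> (bethe_vertices d k) bethe_adj) =
           (\<Sum>j\<in>{1..k-1}. repeat_mset (d ^ (k - j - 1) * (d - 1))
                (spec_mset (leading_submat j (T_mat d k \<alpha>))))
           + spec_mset (T_mat d k \<alpha>)
       \<and> largest_eigenvalue (T_mat d k \<alpha>) =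
           largest_eigenvalue (A_alpha \<alpha> (bethe_vertices d k) bethe_adj)"
  using spec_mset_A_alpha_bethe[OF assms(1,2)] largest_eigenvalue_A_alpha_bethe[OF assms(1,2,4)]
  by simp

end
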